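(* Let $a,b,c,d\in\mathbb C$ with $a\notin\mathbb Z$ and $d\notin\{0,-1,-2,\dots\}$. Then, as an identity of formal power series in $x,y$, $$\mathrm H_{11}(a,b,c;d;x,y)={}_1F_1(a;d;x)\,F(b,c;1-a;-y)+\sum_{k=1}^\infty\sum_{l=1}^k\frac{(-1)^{k+l}(k-1)!}{(l-1)!\,l!\,(k-l)!}\,\frac{(b)_l(c)_l}{(1-a)_l(d)_k}\,x^ky^l\,{}_1F_1(a+k;d+k;x)\,F(b+l,c+l;1-a+l;-y).$$
   Context: Pochhammer symbol: $(\lambda)_k=\Gamma(\lambda+k)/\Gamma(\lambda)$ for every integer $k$ (possibly negative) whenever defined; $(\lambda)_0=1$. $F(a,b;c;x)=\sum_{k\ge0}\frac{(a)_k(b)_k}{(c)_k k!}x^k$, ${}_1F_1(a;c;x)=\sum_{k\ge0}\frac{(a)_k}{(c)_k k!}x^k$. Confluent Horn function $\mathrm H_{11}(a,b,c;d;x,y)=\sum_{p,q\ge0}\frac{(a)_{p-q}(b)_q(c)_q}{(d)_p\,p!\,q!}x^py^q$. All functions are regarded as formal power series in $x,y$; the infinite double sum converges in the formal (degree) topology. *)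

theory Defs
  imports Complex_Main
begin

text \<open>Formal power series in two variables x, y with complex coefficients,
represented by their coefficient functions: f p q is the coefficient of x^p y^q.\<close>

type_synonym fps2 = "nat \<Rightarrow> nat \<Rightarrow> complex"

definition fps2_add :: "fps2 \<Rightarrow> fps2 \<Rightarrow> fps2" where
  "fps2_add f g = (\<lambda>p q. f p q + g p q)"

definition fps2_mult :: "fps2 \<Rightarrow> fps2 \<Rightarrow> fps2" where
  "fps2_mult f g = (\<lambda>p q. \<Sum>i\<le>p. \<Sum>j\<le>q. f i j * g (p - i) (q - j))"

definition fps2_smult :: "complex \<Rightarrow> fps2 \<Rightarrow> fps2" where
  "fps2_smult c f = (\<lambda>p q. c * f p q)"

definition fps2_setsum :: "('i \<Rightarrow> fps2) \<Rightarrow> 'i set \<Rightarrow> fps2" where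
  "fps2_setsum f A = (\<lambda>p q. \<Sum>i\<in>A. f i p q)"

definition fps2_monom :: "nat \<Rightarrow> nat \<Rightarrow> fps2" where
  "fps2_monom k l = (\<lambda>p q. if p = k \<and> q = l then 1 else 0)"

text \<open>Convergence in the formal (degree) topology: the partial sums of the series
\<Sum>_{k\<ge>0} f k converge to S iff every coefficient of the partial sums is eventually
equal to the corresponding coefficient of S.\<close>
definition fps2_sums :: "(nat \<Rightarrow> fps2) \<Rightarrow> fps2 \<Rightarrow> bool" where
  "fps2_sums f S \<longleftrightarrow>
     (\<forall>p q. eventually (\<lambda>K. (\<Sum>k<K. f k p q) = S p q) sequentially)"

text \<open>Pochhammer symbol with integer index: (\<lambda>)_k = Gamma(\<lambda>+k)/Gamma(\<lambda>);
for k = -m < 0 this is 1/((\<lambda>-1)(\<lambda>-2)...(\<lambda>-m)).\<close>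
definition poch_int :: "complex \<Rightarrow> int \<Rightarrow> complex" where
  "poch_int z k = (if k \<ge> 0 then pochhammer z (nat k)
                   else inverse (pochhammer (z + of_int k) (nat (- k))))"

definition H11 :: "complex \<Rightarrow> complex \<Rightarrow> complex \<Rightarrow> complex \<Rightarrow> fps2" where
  "H11 a b c d = (\<lambda>p q. poch_int a (int p - int q) * pochhammer b q * pochhammer c q
                        / (pochhammer d p * fact p * fact q))"

definition hyp1F1_x :: "complex \<Rightarrow> complex \<Rightarrow> fps2" where
  "hyp1F1_x a c = (\<lambda>p q. if q = 0 then pochhammer a p / (pochhammer c p * fact p) else 0)"

definition hyp2F1_negy :: "complex \<Rightarrow> complex \<Rightarrow> complex \<Rightarrow> fps2" where
  "hyp2F1_negy a b c = (\<lambda>p q. if p = 0 then pochhammer a q * pochhammer b q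
                                   / (pochhammer c q * fact q) * (-1) ^ q else 0)"

end

theory Submission
  imports Defs
begin

text \<open>Compare coefficients of \<open>x^p y^q\<close>. In the \<open>(k,l)\<close> term the Pochhammer symbols
recombine into \<open>(b)_q (c)_q / ((1-a)_q (d)_p)\<close> times a binomial factor
\<open>C(k-1,l-1) C(q,l)\<close>, whose sum over \<open>l\<close> is \<open>(q)_k / k!\<close> by Vandermonde's identity.
The remaining sum \<open>\<Sum>k\<le>p. (-1)^k C(p,k) (q)_k (a+k)_(p-k)\<close> is Vandermonde's identity for
rising factorials after the reflection \<open>(z)_n = (-1)^n (1-z-n)_n\<close>, and equals \<open>(a-q)_p\<close>.
Finally \<open>(a)_(p-q) = (-1)^q (a-q)_p / (1-a)_q\<close> whenever \<open>a \<notin> \<int>\<close>, including the case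
\<open>p < q\<close> of a negative index. Only the terms \<open>k \<le> p\<close> contribute to the coefficient of
\<open>x^p y^q\<close>, which gives convergence in the formal topology.\<close>

lemma pochhammer_ne_0_if_not_Ints:
  fixes z :: "'a::field_char_0"
  assumes "z \<notin> \<int>"
  shows "pochhammer z n \<noteq> 0"
  using assms by (auto simp: pochhammer_eq_0_iff)

lemma pochhammer_shift_ne_0:
  fixes z :: "'a::field_char_0"
  assumes "\<forall>n::nat. z \<noteq> - of_nat n"
  shows "pochhammer (z + of_nat j) m \<noteq> 0"
proof
  assume "pochhammer (z + of_nat j) m = 0"
  then obtain i where "z + of_nat j = - of_nat i"
    by (auto simp: pochhammer_eq_0_iff)
  then have "z = - of_nat (i + j)"
    by (simp add: algebra_simps)
  with assms show False by blast
qed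

lemma pochhammer_diff_binomial_sum:
  fixes a x :: "'a::comm_ring_1"
  shows "pochhammer (a - x) p =
    (\<Sum>k\<le>p. (-1)^k * of_nat (p choose k) * pochhammer x k * pochhammer (a + of_nat k) (p - k))"
proof -
  have reflect: "(-1)^p * pochhammer (1 - a - of_nat p) (p - k) =
      (-1)^k * pochhammer (a + of_nat k) (p - k)" if "k \<le> p" for k
  proof -
    have "- (a + of_nat p - 1) = 1 - a - of_nat p"
      by (simp add: algebra_simps)
    moreover have "a + of_nat p - 1 - of_nat (p - k) + 1 = a + of_nat k"
      using that by (simp add: of_nat_diff)
    ultimately have "pochhammer (1 - a - of_nat p) (p - k) =
        (-1)^(p - k) * pochhammer (a + of_nat k) (p - k)"
      using pochhammer_minus[of "a + of_nat p - 1" "p - k"] by (simp add: diff_diff_eq)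
    moreover have "(-1::'a)^p * (-1)^(p - k) = (-1)^k"
      unfolding power_add[symmetric]
      using neg_one_power_add_eq_neg_one_power_diff[of "p - k" p] that by simp
    ultimately show ?thesis by (simp add: mult.assoc[symmetric])
  qed
  have e: "a - x + of_nat p - 1 - of_nat p + 1 = a - x"
    "- (a - x + of_nat p - 1) = x + (1 - a - of_nat p)"
    by (simp_all add: algebra_simps)
  have "pochhammer (a - x) p = (-1)^p * pochhammer (x + (1 - a - of_nat p)) p"
    using pochhammer_minus'[of "a - x + of_nat p - 1" p] unfolding e .
  also have "\<dots> = (\<Sum>k\<le>p. of_nat (p choose k) * pochhammer x k *
      ((-1)^p * pochhammer (1 - a - of_nat p) (p - k)))"
    unfolding pochhammer_binomial_sum[of x "1 - a - of_nat p"] by (simp add: sum_distrib_left mult_ac)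
  also have "\<dots> = (\<Sum>k\<le>p. (-1)^k * of_nat (p choose k) * pochhammer x k *
      pochhammer (a + of_nat k) (p - k))"
    by (intro sum.cong refl) (simp add: reflect)
  finally show ?thesis .
qed

lemma sum_sum_atMost_delta:
  fixes p q k l :: nat
  shows "(\<Sum>i\<le>p. \<Sum>j\<le>q. if i = k \<and> j = l then x else 0) =
    (if k \<le> p \<and> l \<le> q then x else 0)"
proof -
  have "(\<Sum>j\<le>q. if i = k \<and> j = l then x else 0) = (if i = k \<and> l \<le> q then x else 0)"
    for i
    by (cases "i = k") auto
  then show ?thesis
    by (cases "l \<le> q") auto
qed

lemma fps2_mult_monom:
  "fps2_mult (fps2_monom k l) f p q = (if k \<le> p \<and> l \<le> q then f (p - k) (q - l) else 0)"
proof -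
  have "fps2_mult (fps2_monom k l) f p q =
      (\<Sum>i\<le>p. \<Sum>j\<le>q. if i = k \<and> j = l then f (p - k) (q - l) else 0)"
    unfolding fps2_mult_def fps2_monom_def by (intro sum.cong) auto
  then show ?thesis
    by (simp add: sum_sum_atMost_delta)
qed

lemma fps2_mult_x_series_y_series:
  assumes "\<And>i j. j \<noteq> 0 \<Longrightarrow> f i j = 0" and "\<And>i j. i \<noteq> 0 \<Longrightarrow> g i j = 0"
  shows "fps2_mult f g p q = f p 0 * g 0 q"
proof -
  have "fps2_mult f g p q = (\<Sum>i\<le>p. \<Sum>j\<le>q. if i = p \<and> j = 0 then f p 0 * g 0 q else 0)"
    unfolding fps2_mult_def by (intro sum.cong) (auto simp: assms)
  then show ?thesis
    by (simp add: sum_sum_atMost_delta)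
qed

lemma fps2_mult_hyp1F1_x_hyp2F1_negy:
  "fps2_mult (hyp1F1_x \<alpha> \<delta>) (hyp2F1_negy \<beta> \<gamma> \<epsilon>) p q =
     pochhammer \<alpha> p / (pochhammer \<delta> p * fact p) *
     (pochhammer \<beta> q * pochhammer \<gamma> q / (pochhammer \<epsilon> q * fact q) * (-1) ^ q)"
  by (subst fps2_mult_x_series_y_series) (auto simp: hyp1F1_x_def hyp2F1_negy_def)

lemma fps2_sums_finite_support:
  assumes "\<And>p q k. N p q < k \<Longrightarrow> f k p q = 0"
    and "\<And>p q. (\<Sum>k\<le>N p q. f k p q) = S p q"
  shows "fps2_sums f S"
  unfolding fps2_sums_def eventually_sequentially
proof (intro allI exI impI)
  fix p q K
  assume "Suc (N p q) \<le> K"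
  then have "(\<Sum>k<K. f k p q) = (\<Sum>k\<le>N p q. f k p q)"
    using assms(1) by (intro sum.mono_neutral_right) auto
  then show "(\<Sum>k<K. f k p q) = S p q"
    using assms(2) by simp
qed

lemma poch_int_diff:
  fixes a :: complex
  assumes "a \<notin> \<int>"
  shows "poch_int a (int p - int q) = (-1)^q * pochhammer (a - of_nat q) p / pochhammer (1 - a) q"
proof -
  have reflect: "pochhammer (a - of_nat q) q = (-1)^q * pochhammer (1 - a) q"
    using pochhammer_minus[of "of_nat q - a" q] by (simp add: algebra_simps)
  have ne: "pochhammer (1 - a) q \<noteq> 0"
    using assms by (intro pochhammer_ne_0_if_not_Ints) simp
  show ?thesis
  proof (cases "q \<le> p")
    case True
    then have "pochhammer (a - of_nat q) p = pochhammer (a - of_nat q) q * pochhammer a (p - q)"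
      by (simp add: pochhammer_product)
    with True reflect ne show ?thesis
      by (simp add: poch_int_def nat_diff_distrib mult.assoc)
  next
    case False
    then have split: "pochhammer (a - of_nat q) q =
        pochhammer (a - of_nat q) p * pochhammer (a - of_nat q + of_nat p) (q - p)"
      by (simp add: pochhammer_product)
    have "pochhammer (a - of_nat q + of_nat p) (q - p) \<noteq> 0"
      using assms by (intro pochhammer_ne_0_if_not_Ints) simp
    with False reflect split ne show ?thesis
      by (simp add: poch_int_def nat_diff_distrib field_simps)
  qed
qed

definition H11_expansion_summand ::
    "complex \<Rightarrow> complex \<Rightarrow> complex \<Rightarrow> complex \<Rightarrow> nat \<Rightarrow> nat \<Rightarrow> fps2" where
  "H11_expansion_summand a b c d k l =
     fps2_smult
       ((-1) ^ (k + l) * fact (k - 1) / (fact (l - 1) * fact l * fact (k - l))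
        * (pochhammer b l * pochhammer c l / (pochhammer (1 - a) l * pochhammer d k)))
       (fps2_mult (fps2_monom k l)
         (fps2_mult (hyp1F1_x (a + of_nat k) (d + of_nat k))
           (hyp2F1_negy (b + of_nat l) (c + of_nat l) (1 - a + of_nat l))))"

definition H11_expansion_term :: "complex \<Rightarrow> complex \<Rightarrow> complex \<Rightarrow> complex \<Rightarrow> nat \<Rightarrow> fps2" where
  "H11_expansion_term a b c d k =
     (if k = 0 then fps2_mult (hyp1F1_x a d) (hyp2F1_negy b c (1 - a))
      else fps2_setsum (H11_expansion_summand a b c d k) {1..k})"

lemma H11_expansion_summand_coeff:
  assumes a: "a \<notin> \<int>" and d: "\<forall>n::nat. d \<noteq> - of_nat n"
    and kl: "1 \<le> l" "l \<le> k" "k \<le> p"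
  shows "H11_expansion_summand a b c d k l p q =
    (-1)^q * pochhammer b q * pochhammer c q
      / (pochhammer (1 - a) q * pochhammer d p * fact p * fact q)
    * ((-1)^k * of_nat (p choose k) * fact k * pochhammer (a + of_nat k) (p - k)
       * of_nat ((k - 1) choose (l - 1)) * of_nat (q choose l))"
proof (cases "l \<le> q")
  case False
  then show ?thesis
    by (simp add: H11_expansion_summand_def fps2_smult_def fps2_mult_monom)
next
  case True
  have "pochhammer (1 - a + of_nat l) (q - l) \<noteq> 0" "pochhammer (1 - a) l \<noteq> 0"
    using a by (auto intro!: pochhammer_ne_0_if_not_Ints)
  moreover have "pochhammer (d + of_nat k) (p - k) \<noteq> 0" "pochhammer d k \<noteq> 0"
    using pochhammer_shift_ne_0[OF d, of k] pochhammer_shift_ne_0[OF d, of 0] by auto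
  moreover have "pochhammer z q = pochhammer z l * pochhammer (z + of_nat l) (q - l)" for z :: complex
    using True by (simp add: pochhammer_product)
  moreover have "pochhammer d p = pochhammer d k * pochhammer (d + of_nat k) (p - k)"
    using kl by (simp add: pochhammer_product)
  moreover have "(-1::complex) ^ (k + l) * (-1) ^ (q - l) = (-1)^k * (-1)^q"
    using True by (simp flip: power_add)
  ultimately show ?thesis
    using True kl
    by (simp add: H11_expansion_summand_def fps2_smult_def fps2_mult_monom
        fps2_mult_hyp1F1_x_hyp2F1_negy binomial_fact field_simps)
qed

lemma sum_choose_pred_mult_choose:
  assumes "1 \<le> k"
  shows "(\<Sum>l=1..k. ((k - 1) choose (l - 1)) * (q choose l)) = (q + (k - 1)) choose k"
proof -
  have "(q + (k - 1)) choose k = (\<Sum>l\<le>k. (q choose l) * ((k - 1) choose (k - l)))"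
    by (rule vandermonde[symmetric])
  also have "\<dots> = (\<Sum>l=1..k. (q choose l) * ((k - 1) choose (k - l)))"
    using assms by (intro sum.mono_neutral_right) auto
  also have "\<dots> = (\<Sum>l=1..k. ((k - 1) choose (l - 1)) * (q choose l))"
  proof (intro sum.cong refl)
    fix l
    assume "l \<in> {1..k}"
    then have "(k - 1) choose (k - l) = (k - 1) choose (l - 1)"
      using binomial_symmetric[of "l - 1" "k - 1"] by auto
    then show "(q choose l) * ((k - 1) choose (k - l)) = ((k - 1) choose (l - 1)) * (q choose l)"
      by simp
  qed
  finally show ?thesis ..
qed

lemma pochhammer_of_nat_eq_fact_choose:
  assumes "1 \<le> k"
  shows "pochhammer (of_nat q :: 'a::field_char_0) k = fact k * of_nat ((q + (k - 1)) choose k)"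
proof -
  have "(of_nat ((q + (k - 1)) choose k) :: 'a) =
      pochhammer (of_nat (q + (k - 1)) - of_nat k + 1) k / fact k"
    by (simp add: binomial_gbinomial gbinomial_pochhammer')
  also have "of_nat (q + (k - 1)) - of_nat k + 1 = (of_nat q :: 'a)"
    using assms by (simp add: of_nat_diff)
  finally show ?thesis
    by simp
qed

lemma H11_expansion_term_coeff:
  assumes a: "a \<notin> \<int>" and d: "\<forall>n::nat. d \<noteq> - of_nat n" and "k \<le> p"
  shows "H11_expansion_term a b c d k p q =
    (-1)^q * pochhammer b q * pochhammer c q
      / (pochhammer (1 - a) q * pochhammer d p * fact p * fact q)
    * ((-1)^k * of_nat (p choose k) * pochhammer (of_nat q) k * pochhammer (a + of_nat k) (p - k))"
proof (cases "k = 0")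
  case True
  have "pochhammer (1 - a) q \<noteq> 0" "pochhammer d p \<noteq> 0"
    using a pochhammer_shift_ne_0[OF d, of 0] by (auto intro!: pochhammer_ne_0_if_not_Ints)
  with True show ?thesis
    by (simp add: H11_expansion_term_def fps2_mult_hyp1F1_x_hyp2F1_negy field_simps)
next
  case False
  then have k1: "1 \<le> k"
    by simp
  from False have "H11_expansion_term a b c d k p q =
      (\<Sum>l=1..k. H11_expansion_summand a b c d k l p q)"
    by (simp add: H11_expansion_term_def fps2_setsum_def)
  also have "\<dots> =
    (-1)^q * pochhammer b q * pochhammer c q
      / (pochhammer (1 - a) q * pochhammer d p * fact p * fact q)
    * ((-1)^k * of_nat (p choose k) * fact k * pochhammer (a + of_nat k) (p - k))
    * of_nat (\<Sum>l=1..k. ((k - 1) choose (l - 1)) * (q choose l))"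
    unfolding of_nat_sum sum_distrib_left
    by (intro sum.cong refl) (use assms in \<open>simp add: H11_expansion_summand_coeff mult_ac\<close>)
  also have "\<dots> =
    (-1)^q * pochhammer b q * pochhammer c q
      / (pochhammer (1 - a) q * pochhammer d p * fact p * fact q)
    * ((-1)^k * of_nat (p choose k) * pochhammer (of_nat q) k * pochhammer (a + of_nat k) (p - k))"
    unfolding sum_choose_pred_mult_choose[OF k1] pochhammer_of_nat_eq_fact_choose[OF k1]
    by (simp add: mult_ac)
  finally show ?thesis .
qed

lemma H11_expansion_term_eq_0: "p < k \<Longrightarrow> H11_expansion_term a b c d k p q = 0"
  by (simp add: H11_expansion_term_def H11_expansion_summand_def fps2_setsum_def fps2_smult_def
      fps2_mult_monom)

lemma sum_H11_expansion_term:
  assumes a: "a \<notin> \<int>" and d: "\<forall>n::nat. d \<noteq> - of_nat n"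
  shows "(\<Sum>k\<le>p. H11_expansion_term a b c d k p q) = H11 a b c d p q"
proof -
  have ne: "pochhammer (1 - a) q \<noteq> 0" "pochhammer d p \<noteq> 0"
    using a pochhammer_shift_ne_0[OF d, of 0] by (auto intro!: pochhammer_ne_0_if_not_Ints)
  have "(\<Sum>k\<le>p. H11_expansion_term a b c d k p q) =
    (-1)^q * pochhammer b q * pochhammer c q
      / (pochhammer (1 - a) q * pochhammer d p * fact p * fact q)
    * (\<Sum>k\<le>p. (-1)^k * of_nat (p choose k) * pochhammer (of_nat q) k
        * pochhammer (a + of_nat k) (p - k))"
    by (simp add: H11_expansion_term_coeff[OF a d] sum_distrib_left)
  also have "\<dots> =
    (-1)^q * pochhammer b q * pochhammer c q
      / (pochhammer (1 - a) q * pochhammer d p * fact p * fact q)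
    * pochhammer (a - of_nat q) p"
    by (simp only: pochhammer_diff_binomial_sum)
  also have "\<dots> = H11 a b c d p q"
    using ne by (simp add: H11_def poch_int_diff[OF a] field_simps)
  finally show ?thesis .
qed

theorem mainTheorem12:
  fixes a b c d :: complex
  assumes "a \<notin> \<int>"
    and "\<forall>n::nat. d \<noteq> - of_nat n"
  shows "fps2_sums
     (\<lambda>k. if k = 0 then fps2_mult (hyp1F1_x a d) (hyp2F1_negy b c (1 - a))
          else fps2_setsum (\<lambda>l.
                  fps2_smult
                    ((-1) ^ (k + l) * fact (k - 1) / (fact (l - 1) * fact l * fact (k - l))
                     * (pochhammer b l * pochhammer c l / (pochhammer (1 - a) l * pochhammer d k)))
                    (fps2_mult (fps2_monom k l)
                      (fps2_mult (hyp1F1_x (a + of_nat k) (d + of_nat k))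
                        (hyp2F1_negy (b + of_nat l) (c + of_nat l) (1 - a + of_nat l))))) {1..k})
     (H11 a b c d)"
proof -
  have "fps2_sums (H11_expansion_term a b c d) (H11 a b c d)"
    by (rule fps2_sums_finite_support[where N = "\<lambda>p q. p"])
      (simp_all add: H11_expansion_term_eq_0 sum_H11_expansion_term assms)
  then show ?thesis
    unfolding H11_expansion_term_def[abs_def] H11_expansion_summand_def[abs_def] .
qed

end
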